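(* Let $s\ge 2$ be an integer. If $H$ is any graph of order $t$ without isolated vertices, then $r_{pot}(K_s,H)\ge t+s-2$. In particular, for any tree $T_t$ of order $t$, $r_{pot}(K_s,T_t)\ge t+s-2$.
   Context: All graphs are finite and simple. A sequence of nonnegative integers $\pi=(d_1,\dots,d_n)$ (written in nonincreasing order) is graphic if some graph of order $n$ has degree sequence $\pi$; such a graph is a realization of $\pi$. For a graph $H$, a graphic sequence $\pi$ is potentially $H$-graphic if some realization of $\pi$ contains $H$ as a subgraph. For an $N$-term graphic sequence $\pi=(d_1,\dots,d_N)$, its complementary sequence is $\overline{\pi}=(N-1-d_N,\dots,N-1-d_1)$. For graphs $H_1,H_2$, the potential-Ramsey number $r_{pot}(H_1,H_2)$ is the minimum integer $N$ such that for every $N$-term graphic sequence $\pi$, either $\pi$ is potentially $H_1$-graphic or $\overline{\pi}$ is potentially $H_2$-graphic. $K_s$ is the complete graph on $s$ vertices. *)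

theory Defs
  imports Main "HOL-Library.Extended_Nat"
begin

definition simple_graph :: "'a set \<Rightarrow> ('a \<Rightarrow> 'a \<Rightarrow> bool) \<Rightarrow> bool" where
  "simple_graph V E \<longleftrightarrow> finite V \<and> (\<forall>u v. E u v \<longrightarrow> u \<in> V \<and> v \<in> V)
     \<and> (\<forall>u v. E u v \<longrightarrow> E v u) \<and> (\<forall>v. \<not> E v v)"

definition degree :: "'a set \<Rightarrow> ('a \<Rightarrow> 'a \<Rightarrow> bool) \<Rightarrow> 'a \<Rightarrow> nat" where
  "degree V E v = card {u \<in> V. E v u}"

definition realization :: "nat list \<Rightarrow> (nat \<Rightarrow> nat \<Rightarrow> bool) \<Rightarrow> bool" where
  "realization \<pi> E \<longleftrightarrow> simple_graph {0..<length \<pi>} E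
     \<and> (\<forall>i < length \<pi>. degree {0..<length \<pi>} E i = \<pi> ! i)"

definition graphic :: "nat list \<Rightarrow> bool" where
  "graphic \<pi> \<longleftrightarrow> sorted_wrt (\<ge>) \<pi> \<and> (\<exists>E. realization \<pi> E)"

definition contains_subgraph ::
  "'a set \<Rightarrow> ('a \<Rightarrow> 'a \<Rightarrow> bool) \<Rightarrow> 'b set \<Rightarrow> ('b \<Rightarrow> 'b \<Rightarrow> bool) \<Rightarrow> bool" where
  "contains_subgraph VH EH V E \<longleftrightarrow> (\<exists>f. inj_on f VH \<and> f ` VH \<subseteq> V
      \<and> (\<forall>u\<in>VH. \<forall>v\<in>VH. EH u v \<longrightarrow> E (f u) (f v)))"

definition potentially_graphic :: "'a set \<Rightarrow> ('a \<Rightarrow> 'a \<Rightarrow> bool) \<Rightarrow> nat list \<Rightarrow> bool" where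
  "potentially_graphic VH EH \<pi> \<longleftrightarrow> graphic \<pi> \<and>
     (\<exists>E. realization \<pi> E \<and> contains_subgraph VH EH {0..<length \<pi>} E)"

definition complement_seq :: "nat list \<Rightarrow> nat list" where
  "complement_seq \<pi> = map (\<lambda>d. length \<pi> - 1 - d) (rev \<pi>)"

definition complete_graph_edges :: "nat \<Rightarrow> nat \<Rightarrow> bool" where
  "complete_graph_edges u v \<longleftrightarrow> u \<noteq> v"

text \<open>K_s: vertex set {0..<s}, all pairs of distinct vertices adjacent.\<close>
abbreviation K_verts :: "nat \<Rightarrow> nat set" where "K_verts s \<equiv> {0..<s}"

definition rpot_property ::
  "'a set \<Rightarrow> ('a \<Rightarrow> 'a \<Rightarrow> bool) \<Rightarrow> 'b set \<Rightarrow> ('b \<Rightarrow> 'b \<Rightarrow> bool) \<Rightarrow> nat \<Rightarrow> bool" where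
  "rpot_property V1 E1 V2 E2 N \<longleftrightarrow> (\<forall>\<pi>. length \<pi> = N \<and> graphic \<pi> \<longrightarrow>
      potentially_graphic V1 E1 \<pi> \<or> potentially_graphic V2 E2 (complement_seq \<pi>))"

text \<open>Potential-Ramsey number: least N with the property (\<infinity> if there is none).\<close>
definition rpot ::
  "'a set \<Rightarrow> ('a \<Rightarrow> 'a \<Rightarrow> bool) \<Rightarrow> 'b set \<Rightarrow> ('b \<Rightarrow> 'b \<Rightarrow> bool) \<Rightarrow> enat" where
  "rpot V1 E1 V2 E2 = Inf {enat N | N. rpot_property V1 E1 V2 E2 N}"

end

theory Submission
  imports Defs
begin

text \<open>For \<open>N < t + s - 2\<close> write \<open>N = a + b\<close> with \<open>a \<le> s - 2\<close> and \<open>b < t\<close>, and let \<pi> be the degree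
  sequence of the complete split graph: a clique on \<open>a\<close> vertices completely joined to an
  independent set of \<open>b\<close> vertices, i.e. \<open>\<pi> = ((a+b-1)^a, a^b)\<close> and \<open>\<pi>\<^sup>c = ((b-1)^b, 0^a)\<close>.
  A graph of minimum degree \<open>k\<close> on \<open>n\<close> vertices can only be embedded in a realization with at
  least \<open>n\<close> vertices of degree \<open>\<ge> k\<close>. But \<pi> has only \<open>a < s\<close> entries \<open>\<ge> s - 1\<close>, while \<open>K\<^sub>s\<close> has
  minimum degree \<open>s - 1\<close>; and \<open>\<pi>\<^sup>c\<close> has only \<open>b < t\<close> positive entries, while \<open>H\<close> has minimum
  degree \<open>1\<close>.\<close>

lemma contains_subgraph_card_le_high_degree:
  assumes "contains_subgraph VH EH V E" "finite V"
    and "\<forall>v\<in>VH. k \<le> degree VH EH v"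
  shows "card VH \<le> card {x \<in> V. k \<le> degree V E x}"
proof -
  obtain f where inj: "inj_on f VH" and f_into: "f ` VH \<subseteq> V"
    and f_edges: "\<forall>u\<in>VH. \<forall>v\<in>VH. EH u v \<longrightarrow> E (f u) (f v)"
    using assms(1) unfolding contains_subgraph_def by blast
  have "k \<le> degree V E (f v)" if v: "v \<in> VH" for v
  proof -
    have "f ` {u \<in> VH. EH v u} \<subseteq> {w \<in> V. E (f v) w}"
      using f_into f_edges v by auto
    moreover have "inj_on f {u \<in> VH. EH v u}"
      using inj by (rule inj_on_subset) auto
    moreover have "finite {w \<in> V. E (f v) w}"
      using assms(2) by simp
    ultimately have "degree VH EH v \<le> degree V E (f v)"
      unfolding degree_def by (simp add: card_inj_on_le)
    then show ?thesis using assms(3) v le_trans by blast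
  qed
  then have "f ` VH \<subseteq> {x \<in> V. k \<le> degree V E x}"
    using f_into by auto
  then show ?thesis
    using card_inj_on_le[OF inj] assms(2) by simp
qed

lemma potentially_graphic_card_le_high_entries:
  assumes "potentially_graphic VH EH \<pi>"
    and "\<forall>v\<in>VH. k \<le> degree VH EH v"
  shows "card VH \<le> card {i. i < length \<pi> \<and> k \<le> \<pi> ! i}"
proof -
  obtain E where E: "realization \<pi> E" and H_in_E: "contains_subgraph VH EH {0..<length \<pi>} E"
    using assms(1) unfolding potentially_graphic_def by blast
  have "{x \<in> {0..<length \<pi>}. k \<le> degree {0..<length \<pi>} E x} = {i. i < length \<pi> \<and> k \<le> \<pi> ! i}"
    using E unfolding realization_def by auto
  then show ?thesis
    using contains_subgraph_card_le_high_degree[OF H_in_E _ assms(2)] by simp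
qed

lemma card_high_entries_replicate_append_le:
  fixes x y k :: nat
  assumes "y < k"
  shows "card {i. i < a + b \<and> k \<le> (replicate a x @ replicate b y) ! i} \<le> a"
proof -
  have "(replicate a x @ replicate b y) ! i = (if i < a then x else y)" if "i < a + b" for i
    using that by (simp add: nth_append)
  then have "{i. i < a + b \<and> k \<le> (replicate a x @ replicate b y) ! i} \<subseteq> {0..<a}"
    using assms by (auto split: if_splits)
  then show ?thesis
    using card_mono[of "{0..<a}"] by fastforce
qed

lemma degree_complete_graph:
  assumes "v < s"
  shows "degree (K_verts s) complete_graph_edges v = s - 1"
proof -
  have "{u \<in> K_verts s. complete_graph_edges v u} = {0..<s} - {v}"
    by (auto simp: complete_graph_edges_def)
  with assms show ?thesis
    unfolding degree_def by simp
qed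

lemma degree_ge_1_if_neighbour:
  assumes "simple_graph V E" "u \<in> V" "E v u"
  shows "1 \<le> degree V E v"
proof -
  have "finite {w \<in> V. E v w}"
    using assms(1) unfolding simple_graph_def by simp
  then show ?thesis
    using assms(2,3) unfolding degree_def by (auto simp: Suc_le_eq card_gt_0_iff)
qed

definition complete_split_seq :: "nat \<Rightarrow> nat \<Rightarrow> nat list" where
  "complete_split_seq a b = replicate a (a + b - 1) @ replicate b a"

definition complete_split_edges :: "nat \<Rightarrow> nat \<Rightarrow> nat \<Rightarrow> nat \<Rightarrow> bool" where
  "complete_split_edges a b u v \<longleftrightarrow> u \<noteq> v \<and> u < a + b \<and> v < a + b \<and> (u < a \<or> v < a)"

lemma length_complete_split_seq [simp]: "length (complete_split_seq a b) = a + b"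
  by (simp add: complete_split_seq_def)

lemma nth_complete_split_seq:
  "i < a + b \<Longrightarrow> complete_split_seq a b ! i = (if i < a then a + b - 1 else a)"
  by (simp add: complete_split_seq_def nth_append)

lemma realization_complete_split_seq:
  "realization (complete_split_seq a b) (complete_split_edges a b)"
  unfolding realization_def simple_graph_def degree_def
proof (intro conjI allI impI)
  fix i assume i: "i < length (complete_split_seq a b)"
  show "card {u \<in> {0..<length (complete_split_seq a b)}. complete_split_edges a b i u}
    = complete_split_seq a b ! i"
  proof (cases "i < a")
    case True
    then have "{u \<in> {0..<a + b}. complete_split_edges a b i u} = {0..<a + b} - {i}"
      using i by (auto simp: complete_split_edges_def)
    then show ?thesis using True i by (simp add: nth_complete_split_seq)
  next
    case False
    then have "{u \<in> {0..<a + b}. complete_split_edges a b i u} = {0..<a}"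
      using i by (auto simp: complete_split_edges_def)
    then show ?thesis using False i by (simp add: nth_complete_split_seq)
  qed
qed (auto simp: complete_split_edges_def)

lemma graphic_complete_split_seq: "graphic (complete_split_seq a b)"
proof -
  have "sorted_wrt (\<ge>) (complete_split_seq a b)"
    unfolding sorted_wrt_iff_nth_less by (auto simp: nth_complete_split_seq)
  then show ?thesis
    unfolding graphic_def using realization_complete_split_seq by blast
qed

lemma complement_seq_complete_split_seq:
  "complement_seq (complete_split_seq a b) = replicate b (b - 1) @ replicate a 0"
  by (simp add: complement_seq_def complete_split_seq_def)

lemma not_potentially_complete_graph_complete_split_seq:
  assumes "a < s - 1"
  shows "\<not> potentially_graphic (K_verts s) complete_graph_edges (complete_split_seq a b)"
proof
  assume "potentially_graphic (K_verts s) complete_graph_edges (complete_split_seq a b)"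
  moreover have "\<forall>v\<in>K_verts s. s - 1 \<le> degree (K_verts s) complete_graph_edges v"
    by (simp add: degree_complete_graph)
  ultimately have "card (K_verts s) \<le> card {i. i < length (complete_split_seq a b)
      \<and> s - 1 \<le> complete_split_seq a b ! i}"
    by (rule potentially_graphic_card_le_high_entries)
  then show False
    using card_high_entries_replicate_append_le[OF assms, where a = a and b = b and x = "a + b - 1"]
      assms unfolding complete_split_seq_def by simp
qed

lemma not_potentially_complement_complete_split_seq:
  assumes "simple_graph VH EH" "\<forall>v\<in>VH. \<exists>u\<in>VH. EH v u" "b < card VH"
  shows "\<not> potentially_graphic VH EH (complement_seq (complete_split_seq a b))"
proof
  assume "potentially_graphic VH EH (complement_seq (complete_split_seq a b))"
  moreover have "\<forall>v\<in>VH. 1 \<le> degree VH EH v"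
    using degree_ge_1_if_neighbour[OF assms(1)] assms(2) by blast
  ultimately have "card VH \<le> card {i. i < length (complement_seq (complete_split_seq a b))
      \<and> 1 \<le> complement_seq (complete_split_seq a b) ! i}"
    by (rule potentially_graphic_card_le_high_entries)
  then show False
    using card_high_entries_replicate_append_le[of 0 1, where a = b and b = a and x = "b - 1"]
      assms(3) unfolding complement_seq_complete_split_seq by (simp add: add.commute)
qed

lemma rpot_ge_if_counterexamples:
  assumes "\<And>N. N < M \<Longrightarrow> \<exists>\<pi>. length \<pi> = N \<and> graphic \<pi> \<and> \<not> potentially_graphic V1 E1 \<pi>
      \<and> \<not> potentially_graphic V2 E2 (complement_seq \<pi>)"
  shows "enat M \<le> rpot V1 E1 V2 E2"
  unfolding rpot_def
proof (rule Inf_greatest, clarify)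
  fix N assume "rpot_property V1 E1 V2 E2 N"
  then have "\<not> N < M"
    using assms unfolding rpot_property_def by blast
  then show "enat M \<le> enat N" by simp
qed

theorem proposition3:
  fixes s t :: nat and VH :: "'a set" and EH :: "'a \<Rightarrow> 'a \<Rightarrow> bool"
  assumes "s \<ge> 2"
    and "simple_graph VH EH"
    and "VH \<noteq> {}"
    and "card VH = t"
    and "\<forall>v\<in>VH. \<exists>u\<in>VH. EH v u"
  shows "rpot (K_verts s) complete_graph_edges VH EH \<ge> enat (t + s - 2)"
proof (rule rpot_ge_if_counterexamples)
  fix N assume N: "N < t + s - 2"
  have "finite VH"
    using assms(2) unfolding simple_graph_def by simp
  then have "t \<ge> 1"
    using assms(3,4) card_gt_0_iff[of VH] by linarith
  define a where "a = min N (s - 2)"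
  define b where "b = N - a"
  have "N = a + b" "a < s - 1" "b < t"
    using N \<open>t \<ge> 1\<close> assms(1) unfolding a_def b_def by auto
  then show "\<exists>\<pi>. length \<pi> = N \<and> graphic \<pi>
      \<and> \<not> potentially_graphic (K_verts s) complete_graph_edges \<pi>
      \<and> \<not> potentially_graphic VH EH (complement_seq \<pi>)"
    using graphic_complete_split_seq not_potentially_complete_graph_complete_split_seq
      not_potentially_complement_complete_split_seq[OF assms(2,5)] assms(4)
    by (metis length_complete_split_seq)
qed

end
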